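(* For every zero-normalized $\Gamma_{m,n}$-semimodule $\Delta$, the partition $P(\widehat{\Delta})$ is the conjugate (transpose) of the partition $P(\Delta)$.
   Context: Let $m,n$ be coprime positive integers and $\Gamma_{m,n}=\{am+bn:a,b\in\mathbb{Z}_{\ge0}\}$. A $\Gamma_{m,n}$-semimodule is $\Delta\subset\mathbb{Z}_{\ge0}$ with $\Delta+\Gamma_{m,n}\subset\Delta$; zero-normalized means $\min\Delta=0$. Its dual is $\Delta^*=\{\varphi\in\mathbb{Z}:\varphi+\Delta\subset\Gamma_{m,n}\}$ and $\widehat\Delta=\Delta^*-\min\Delta^*$ (equivalently $\max(\mathbb{Z}\setminus\Delta)-(\mathbb{Z}\setminus\Delta)$). For a zero-normalized semimodule $\Delta$ (which contains all sufficiently large integers), $P(\Delta)$ is the partition whose boundary lattice path is obtained by reading the integers $0,1,2,\dots$ in order and taking a north unit step for each $x\in\Delta$ and a west unit step for each $x\notin\Delta$ (the path bounds the Young diagram of $P(\Delta)$ from above); equivalently, the parts of $P(\Delta)$ are the positive numbers among $\#\{x\in\Delta: x<y\}$, $y\in\mathbb{Z}_{\ge0}\setminus\Delta$. This $P(\Delta)$ is a simultaneous $m$-core and $n$-core (Anderson's correspondence). *)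

theory Defs
  imports Main "HOL-Library.Multiset"
begin

definition Gamma :: "nat \<Rightarrow> nat \<Rightarrow> int set" where
  "Gamma m n = {int a * int m + int b * int n | a b. True}"

definition is_semimodule :: "nat \<Rightarrow> nat \<Rightarrow> int set \<Rightarrow> bool" where
  "is_semimodule m n D \<longleftrightarrow> D \<subseteq> {0..} \<and> (\<forall>x\<in>D. \<forall>g\<in>Gamma m n. x + g \<in> D)"

definition zero_normalized :: "int set \<Rightarrow> bool" where
  "zero_normalized D \<longleftrightarrow> D \<noteq> {} \<and> Inf D = 0"

definition dual :: "nat \<Rightarrow> nat \<Rightarrow> int set \<Rightarrow> int set" where
  "dual m n D = {\<phi>. \<forall>d\<in>D. \<phi> + d \<in> Gamma m n}"

definition hat :: "nat \<Rightarrow> nat \<Rightarrow> int set \<Rightarrow> int set" where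
  "hat m n D = (\<lambda>\<phi>. \<phi> - Inf (dual m n D)) ` dual m n D"

text \<open>Partitions are represented as multisets of positive naturals (their parts).
  P D has as parts the positive numbers among #{x in D. x < y}, y a nonnegative gap of D.\<close>
definition partP :: "int set \<Rightarrow> nat multiset" where
  "partP D = filter_mset (\<lambda>k. 0 < k)
     (image_mset (\<lambda>y. card {x\<in>D. 0 \<le> x \<and> x < y}) (mset_set {y. 0 \<le> y \<and> y \<notin> D}))"

definition conjugate :: "nat multiset \<Rightarrow> nat multiset" where
  "conjugate M = filter_mset (\<lambda>k. 0 < k)
     (mset (map (\<lambda>j. size (filter_mset (\<lambda>p. j \<le> p) M)) [1..<Suc (sum_mset M)]))"

end

theory Submission
  imports Defs
begin

text \<open>Write \<open>F = mn - m - n\<close> for the Frobenius number of \<open>\<Gamma>\<^sub>m\<^sub>,\<^sub>n\<close>. Its symmetry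
  (\<open>z \<in> \<Gamma>\<close> iff \<open>F - z \<notin> \<Gamma>\<close>) turns the dual of a semimodule \<open>\<Delta>\<close> into
  \<open>{\<phi>. F - \<phi> \<notin> \<Delta>}\<close>, so that after normalisation \<open>\<Delta>\<^sup>\<and> = {e. g - e \<notin> \<Delta>}\<close> with \<open>g\<close>
  the largest gap of \<open>\<Delta>\<close>. The nonnegative gaps of \<open>\<Delta>\<^sup>\<and>\<close> are the points \<open>g - d\<close>,
  \<open>d \<in> \<Delta> \<inter> [0, g]\<close>, and the part of \<open>P(\<Delta>\<^sup>\<and>)\<close> at \<open>g - d\<close> is the number of gaps of \<open>\<Delta>\<close>
  above \<open>d\<close>. If \<open>d\<close> is the \<open>j\<close>-th element of \<open>\<Delta>\<close>, a gap lies above \<open>d\<close> exactly when its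
  part in \<open>P(\<Delta>)\<close> is at least \<open>j\<close>; so this number is the \<open>j\<close>-th part of the conjugate.\<close>

definition frobenius :: "nat \<Rightarrow> nat \<Rightarrow> int" where
  "frobenius m n = int m * int n - int m - int n"

lemma Gamma_nonneg: "x \<in> Gamma m n \<Longrightarrow> 0 \<le> x"
  unfolding Gamma_def by auto

lemma zero_in_Gamma: "0 \<in> Gamma m n"
proof -
  have "0 = int 0 * int m + int 0 * int n"
    by simp
  then show ?thesis
    unfolding Gamma_def by blast
qed

lemma Gamma_normal_form:
  fixes m n :: nat and z :: int
  assumes "0 < n" "coprime m n"
  obtains a b where "0 \<le> a" "a < int n" "z = a * int m + b * int n"
proof -
  obtain u v where "u * int m + v * int n = gcd (int m) (int n)"
    using bezout_int by blast
  with assms(2) have uv: "u * int m + v * int n = 1"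
    by (simp add: coprime_iff_gcd_eq_1 gcd_int_def)
  define q r where "q = (z * u) div int n" and "r = (z * u) mod int n"
  have zu: "z * u = r + q * int n"
    unfolding q_def r_def by simp
  have "z = z * (u * int m + v * int n)"
    using uv by simp
  also have "\<dots> = (z * u) * int m + (z * v) * int n"
    by (simp add: algebra_simps)
  also have "\<dots> = r * int m + (z * v + q * int m) * int n"
    unfolding zu by (simp add: algebra_simps)
  finally have "z = r * int m + (z * v + q * int m) * int n" .
  moreover have "0 \<le> r" "r < int n"
    unfolding r_def using assms(1) by auto
  ultimately show thesis using that by blast
qed

lemma Gamma_iff_nonneg_coeff:
  fixes m n :: nat and a b :: int
  assumes "coprime m n" "0 \<le> a" "a < int n"
  shows "a * int m + b * int n \<in> Gamma m n \<longleftrightarrow> 0 \<le> b"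
proof
  assume "0 \<le> b"
  then have "a * int m + b * int n = int (nat a) * int m + int (nat b) * int n"
    using assms(2) by simp
  then show "a * int m + b * int n \<in> Gamma m n"
    unfolding Gamma_def by blast
next
  assume "a * int m + b * int n \<in> Gamma m n"
  then obtain a' b' :: nat where "a * int m + b * int n = int a' * int m + int b' * int n"
    unfolding Gamma_def by blast
  then have eq: "(int a' - a) * int m = (b - int b') * int n"
    by (simp add: algebra_simps)
  then have "int n dvd (int a' - a) * int m"
    by simp
  moreover have "coprime (int n) (int m)"
    using assms(1) by (simp add: coprime_commute)
  ultimately have "int n dvd int a' - a"
    using coprime_dvd_mult_left_iff by blast
  then obtain t where t: "int a' - a = int n * t"
    by (elim dvdE)
  have "int n * (-1) < int n * t"
    using t assms(3) by simp
  moreover have "0 < int n"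
    using assms(2,3) by simp
  ultimately have "0 \<le> t"
    by (simp only: mult_less_cancel_left_pos)
  have "int n * (b - int b') = int n * (t * int m)"
    using eq t by (simp add: algebra_simps)
  then have "b - int b' = t * int m"
    using assms(2,3) by simp
  moreover have "0 \<le> t * int m"
    using \<open>0 \<le> t\<close> by simp
  ultimately show "0 \<le> b"
    by linarith
qed

lemma Gamma_symmetric:
  assumes "0 < n" "coprime m n"
  shows "z \<in> Gamma m n \<longleftrightarrow> frobenius m n - z \<notin> Gamma m n"
proof -
  obtain a b where ab: "0 \<le> a" "a < int n" "z = a * int m + b * int n"
    using Gamma_normal_form[OF assms] .
  have "frobenius m n - z = (int n - 1 - a) * int m + (-1 - b) * int n"
    using ab(3) by (simp add: frobenius_def algebra_simps)
  then show ?thesis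
    using ab Gamma_iff_nonneg_coeff[OF assms(2)] by (simp; arith)
qed

lemma frobenius_notin_Gamma:
  assumes "0 < n" "coprime m n"
  shows "frobenius m n \<notin> Gamma m n"
  using Gamma_symmetric[OF assms, of 0] zero_in_Gamma by simp

lemma zero_normalized_semimodule_zero_mem:
  assumes "is_semimodule m n D" "zero_normalized D"
  shows "0 \<in> D"
proof (rule ccontr)
  assume "0 \<notin> D"
  have "1 \<le> x" if "x \<in> D" for x
  proof -
    have "0 \<le> x" "x \<noteq> 0"
      using assms(1) \<open>0 \<notin> D\<close> that unfolding is_semimodule_def by auto
    then show ?thesis by linarith
  qed
  then have "1 \<le> Inf D"
    using assms(2) unfolding zero_normalized_def by (intro cInf_greatest) auto
  with assms(2) show False
    unfolding zero_normalized_def by simp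
qed

lemma semimodule_above_frobenius:
  assumes "0 < n" "coprime m n" "is_semimodule m n D" "zero_normalized D"
    and "frobenius m n < x"
  shows "x \<in> D"
proof -
  have "frobenius m n - x \<notin> Gamma m n"
    using Gamma_nonneg assms(5) by force
  then have "x \<in> Gamma m n"
    using Gamma_symmetric[OF assms(1,2)] by blast
  then have "0 + x \<in> D"
    using zero_normalized_semimodule_zero_mem[OF assms(3,4)] assms(3)
    unfolding is_semimodule_def by blast
  then show ?thesis by simp
qed

lemma dual_eq:
  assumes "0 < n" "coprime m n" "is_semimodule m n D"
  shows "dual m n D = {\<phi>. frobenius m n - \<phi> \<notin> D}"
proof (intro set_eqI iffI CollectI)
  fix \<phi> assume "\<phi> \<in> dual m n D"
  then have "frobenius m n - \<phi> \<in> D \<Longrightarrow> \<phi> + (frobenius m n - \<phi>) \<in> Gamma m n"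
    unfolding dual_def by blast
  then show "frobenius m n - \<phi> \<notin> D"
    using frobenius_notin_Gamma[OF assms(1,2)] by auto
next
  fix \<phi> assume \<phi>: "\<phi> \<in> {\<phi>. frobenius m n - \<phi> \<notin> D}"
  have "\<phi> + d \<in> Gamma m n" if "d \<in> D" for d
  proof (rule ccontr)
    assume "\<phi> + d \<notin> Gamma m n"
    then have "frobenius m n - (\<phi> + d) \<in> Gamma m n"
      using Gamma_symmetric[OF assms(1,2), of "\<phi> + d"] by simp
    with that assms(3) have "d + (frobenius m n - (\<phi> + d)) \<in> D"
      unfolding is_semimodule_def by blast
    with \<phi> show False
      by simp
  qed
  then show "\<phi> \<in> dual m n D"
    unfolding dual_def by blast
qed

lemma obtain_largest_gap:
  fixes D :: "int set"
  assumes "D \<subseteq> {0..}" "\<forall>x>c. x \<in> D"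
  obtains g where "g \<notin> D" "\<forall>x>g. x \<in> D"
proof -
  define N where "N = {x. -1 \<le> x \<and> x \<notin> D}"
  have "N \<subseteq> {-1..c}"
    unfolding N_def using assms(2) by (auto simp: not_less[symmetric])
  then have "finite N"
    by (rule finite_subset) simp
  moreover have "-1 \<in> N"
    unfolding N_def using assms(1) by auto
  ultimately have Max_in_N: "Max N \<in> N"
    by (intro Max_in) auto
  have "x \<in> D" if "Max N < x" for x
  proof (rule ccontr)
    assume "x \<notin> D"
    with that Max_in_N have "x \<in> N"
      unfolding N_def by simp
    then have "x \<le> Max N"
      using \<open>finite N\<close> by simp
    with that show False
      by simp
  qed
  moreover have "Max N \<notin> D"
    using Max_in_N unfolding N_def by simp
  ultimately show thesis
    using that by blast
qed

lemma normalize_reflected_complement: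
  fixes D :: "int set"
  assumes "g \<notin> D" "\<forall>x>g. x \<in> D"
  shows "(\<lambda>\<phi>. \<phi> - Inf {\<phi>. F - \<phi> \<notin> D}) ` {\<phi>. F - \<phi> \<notin> D} = {e. g - e \<notin> D}"
proof -
  have "Inf {\<phi>. F - \<phi> \<notin> D} = F - g"
  proof (rule cInf_eq_minimum)
    show "F - g \<in> {\<phi>. F - \<phi> \<notin> D}"
      using assms(1) by simp
    show "F - g \<le> \<phi>" if "\<phi> \<in> {\<phi>. F - \<phi> \<notin> D}" for \<phi>
      using that assms(2) by (auto simp: not_less[symmetric])
  qed
  moreover have "(\<lambda>\<phi>. \<phi> - (F - g)) ` {\<phi>. F - \<phi> \<notin> D} = {e. g - e \<notin> D}"
  proof (intro set_eqI iffI)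
    fix e assume "e \<in> {e. g - e \<notin> D}"
    then show "e \<in> (\<lambda>\<phi>. \<phi> - (F - g)) ` {\<phi>. F - \<phi> \<notin> D}"
      by (intro image_eqI[of _ _ "e + (F - g)"]) auto
  qed auto
  ultimately show ?thesis by simp
qed

lemma hat_eq_reflected_complement:
  assumes "0 < n" "coprime m n" "is_semimodule m n D" "g \<notin> D" "\<forall>x>g. x \<in> D"
  shows "hat m n D = {e. g - e \<notin> D}"
  unfolding hat_def dual_eq[OF assms(1-3)] using normalize_reflected_complement[OF assms(4,5)] .

definition gaps :: "int set \<Rightarrow> int set" where
  "gaps D = {y. 0 \<le> y \<and> y \<notin> D}"

definition count_below :: "int set \<Rightarrow> int \<Rightarrow> nat" where
  "count_below D y = card {x\<in>D. 0 \<le> x \<and> x < y}"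

lemma gaps_le_largest_gap: "\<forall>x>g. x \<in> D \<Longrightarrow> y \<in> gaps D \<Longrightarrow> y \<le> g"
  unfolding gaps_def by (auto simp: not_less[symmetric])

lemma finite_gaps: "\<forall>x>g. x \<in> D \<Longrightarrow> finite (gaps D)"
  by (rule finite_subset[of _ "{0..g}"]) (auto dest: gaps_le_largest_gap simp: gaps_def)

lemma finite_nonneg_below: "finite {x\<in>D. 0 \<le> x \<and> x < (y::int)}"
  by (rule finite_subset[of _ "{0..<y}"]) auto

lemma count_below_mono: "a \<le> b \<Longrightarrow> count_below D a \<le> count_below D b"
  unfolding count_below_def by (rule card_mono[OF finite_nonneg_below]) auto

lemma count_below_less_iff:
  assumes "a \<in> D" "0 \<le> a"
  shows "count_below D a < count_below D b \<longleftrightarrow> a < b"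
proof
  assume "a < b"
  then show "count_below D a < count_below D b"
    unfolding count_below_def using assms by (intro psubset_card_mono[OF finite_nonneg_below]) auto
qed (use count_below_mono[of b a D] in linarith)

lemma partP_eq_image_gaps:
  assumes "finite (gaps D)"
  shows "partP D = image_mset (count_below D) (mset_set {y\<in>gaps D. 0 < count_below D y})"
  using assms unfolding partP_def gaps_def count_below_def
  by (simp add: filter_mset_image_mset)

lemma size_filter_partP_ge:
  assumes "finite (gaps D)" "0 < j"
  shows "size (filter_mset (\<lambda>p. j \<le> p) (partP D)) = card {y\<in>gaps D. j \<le> count_below D y}"
proof -
  have "{y\<in>gaps D. 0 < count_below D y \<and> j \<le> count_below D y} = {y\<in>gaps D. j \<le> count_below D y}"
    using assms(2) by auto
  then show ?thesis
    using assms(1) by (simp add: partP_eq_image_gaps filter_mset_image_mset)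
qed

lemma conjugate_eq_image:
  fixes M :: "nat multiset"
  assumes "\<forall>p\<in>#M. p \<le> N" "N = 0 \<or> N \<in># M"
  shows "conjugate M = image_mset (\<lambda>j. size (filter_mset (\<lambda>p. j \<le> p) M)) (mset_set {1..N})"
proof -
  let ?f = "\<lambda>j. size (filter_mset (\<lambda>p. j \<le> p) M)"
  have "N \<le> sum_mset M"
    using assms(2) sum_mset.remove[of N M] by auto
  have positive: "{j\<in>{1..<Suc (sum_mset M)}. 0 < ?f j} = {1..N}"
  proof (intro set_eqI iffI)
    fix j assume "j \<in> {j\<in>{1..<Suc (sum_mset M)}. 0 < ?f j}"
    then obtain p where "p \<in># M" "j \<le> p" "1 \<le> j"
      by (auto simp: nonempty_has_size[symmetric])
    then show "j \<in> {1..N}"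
      using assms(1) by fastforce
  next
    fix j assume "j \<in> {1..N}"
    then have "N \<in># filter_mset (\<lambda>p. j \<le> p) M"
      using assms(2) by auto
    then show "j \<in> {j\<in>{1..<Suc (sum_mset M)}. 0 < ?f j}"
      using \<open>j \<in> {1..N}\<close> \<open>N \<le> sum_mset M\<close> by (auto simp: nonempty_has_size[symmetric])
  qed
  show ?thesis
    by (simp only: conjugate_def mset_map mset_upt filter_mset_image_mset
        filter_mset_mset_set[OF finite_atLeastLessThan] positive)
qed

lemma bij_betw_Suc_count_below:
  "bij_betw (\<lambda>x. Suc (count_below D x)) {x\<in>D. 0 \<le> x \<and> x < y} {1..count_below D y}"
proof -
  let ?L = "{x\<in>D. 0 \<le> x \<and> x < y}"
  have inj: "inj_on (\<lambda>x. Suc (count_below D x)) ?L"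
    by (intro inj_onI) (metis (no_types, lifting) count_below_less_iff linorder_neqE mem_Collect_eq
        nat.inject order.irrefl)
  have "(\<lambda>x. Suc (count_below D x)) ` ?L \<subseteq> {1..count_below D y}"
    using count_below_less_iff by (auto simp: Suc_le_eq)
  moreover have "card ((\<lambda>x. Suc (count_below D x)) ` ?L) = card {1..count_below D y}"
    using card_image[OF inj] by (simp add: count_below_def)
  ultimately show ?thesis
    using inj by (intro bij_betw_imageI card_subset_eq) auto
qed

lemma count_below_reflected_complement:
  assumes "\<forall>x>g. x \<in> D" "0 \<le> d"
  shows "count_below {e. g - e \<notin> D} (g - d) = card {y\<in>gaps D. d < y}"
proof -
  have "{x\<in>{e. g - e \<notin> D}. 0 \<le> x \<and> x < g - d} = (\<lambda>y. g - y) ` {y\<in>gaps D. d < y}"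
  proof (intro set_eqI iffI)
    fix x assume "x \<in> {x\<in>{e. g - e \<notin> D}. 0 \<le> x \<and> x < g - d}"
    then show "x \<in> (\<lambda>y. g - y) ` {y\<in>gaps D. d < y}"
      using assms(2) unfolding gaps_def by (intro image_eqI[of _ _ "g - x"]) auto
  next
    fix x assume "x \<in> (\<lambda>y. g - y) ` {y\<in>gaps D. d < y}"
    then show "x \<in> {x\<in>{e. g - e \<notin> D}. 0 \<le> x \<and> x < g - d}"
      using assms(1) unfolding gaps_def by (force simp: not_less[symmetric])
  qed
  then show ?thesis
    unfolding count_below_def by (simp add: card_image inj_on_def)
qed

lemma partP_reflected_complement_image:
  fixes D :: "int set"
  assumes "D \<subseteq> {0..}" "g \<notin> D" "\<forall>x>g. x \<in> D"
  shows "partP {e. g - e \<notin> D} =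
    image_mset (\<lambda>d. card {y\<in>gaps D. d < y}) (mset_set {d\<in>D. 0 \<le> d \<and> d < g})"
proof -
  let ?E = "{e. g - e \<notin> D}" and ?L = "{d\<in>D. 0 \<le> d \<and> d < g}"
  have "gaps ?E \<subseteq> {0..g}"
    using assms(1) unfolding gaps_def by force
  then have finE: "finite (gaps ?E)"
    by (rule finite_subset) simp
  have parts_pos: "0 < card {y\<in>gaps D. d < y} \<longleftrightarrow> d < g" if "0 \<le> d" for d
  proof
    assume "d < g"
    then have "g \<in> {y\<in>gaps D. d < y}"
      using that assms(2) unfolding gaps_def by simp
    then show "0 < card {y\<in>gaps D. d < y}"
      using finite_gaps[OF assms(3)] by (auto simp: card_gt_0_iff)
  qed (use gaps_le_largest_gap[OF assms(3)] in \<open>fastforce simp: card_gt_0_iff\<close>)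
  have "{y\<in>gaps ?E. 0 < count_below ?E y} = (\<lambda>d. g - d) ` ?L"
  proof (intro set_eqI iffI)
    fix y assume y: "y \<in> {y\<in>gaps ?E. 0 < count_below ?E y}"
    then have "0 \<le> g - y" "g - y \<in> D"
      using assms(1) unfolding gaps_def by auto
    with y show "y \<in> (\<lambda>d. g - d) ` ?L"
      using count_below_reflected_complement[OF assms(3), of "g - y"] parts_pos
      by (intro image_eqI[of _ _ "g - y"]) auto
  next
    fix y assume "y \<in> (\<lambda>d. g - d) ` ?L"
    then obtain d where "d \<in> D" "0 \<le> d" "d < g" "y = g - d"
      by auto
    then show "y \<in> {y\<in>gaps ?E. 0 < count_below ?E y}"
      using count_below_reflected_complement[OF assms(3), of d] parts_pos unfolding gaps_def by auto
  qed
  then have "partP ?E = image_mset (count_below ?E) (image_mset (\<lambda>d. g - d) (mset_set ?L))"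
    by (simp add: partP_eq_image_gaps[OF finE] image_mset_mset_set inj_on_def)
  also have "\<dots> = image_mset (\<lambda>d. card {y\<in>gaps D. d < y}) (mset_set ?L)"
    unfolding multiset.map_comp
  proof (rule image_mset_cong)
    fix d assume "d \<in># mset_set ?L"
    then have "0 \<le> d"
      using finite_nonneg_below[of D g] by auto
    then show "(count_below ?E \<circ> (\<lambda>d. g - d)) d = card {y\<in>gaps D. d < y}"
      using count_below_reflected_complement[OF assms(3)] by simp
  qed
  finally show ?thesis .
qed

lemma conjugate_partP_image:
  fixes D :: "int set"
  assumes "g \<notin> D" "\<forall>x>g. x \<in> D"
  shows "conjugate (partP D) =
    image_mset (\<lambda>d. card {y\<in>gaps D. d < y}) (mset_set {d\<in>D. 0 \<le> d \<and> d < g})"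
proof -
  let ?L = "{d\<in>D. 0 \<le> d \<and> d < g}"
  let ?h = "\<lambda>j. size (filter_mset (\<lambda>p. j \<le> p) (partP D))"
  have fin: "finite (gaps D)"
    using finite_gaps[OF assms(2)] .
  \<comment> \<open>The largest part is the one at the largest gap \<open>g\<close>.\<close>
  have "\<forall>p\<in>#partP D. p \<le> count_below D g"
    using fin gaps_le_largest_gap[OF assms(2)] count_below_mono
    by (auto simp: partP_eq_image_gaps[OF fin])
  moreover have "count_below D g = 0 \<or> count_below D g \<in># partP D"
  proof (cases "0 < count_below D g")
    case True
    then have "0 < g"
      by (auto simp: count_below_def card_gt_0_iff)
    with True assms(1) have "g \<in> {y\<in>gaps D. 0 < count_below D y}"
      by (simp add: gaps_def)
    moreover have "finite {y\<in>gaps D. 0 < count_below D y}"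
      using fin by simp
    ultimately show ?thesis
      by (simp add: partP_eq_image_gaps[OF fin])
  qed simp
  ultimately have "conjugate (partP D) = image_mset ?h (mset_set {1..count_below D g})"
    by (rule conjugate_eq_image)
  also have "\<dots> = image_mset ?h (image_mset (\<lambda>d. Suc (count_below D d)) (mset_set ?L))"
    using bij_betw_Suc_count_below[of D g]
    by (simp add: image_mset_mset_set bij_betw_def)
  also have "\<dots> = image_mset (\<lambda>d. card {y\<in>gaps D. d < y}) (mset_set ?L)"
    unfolding multiset.map_comp
  proof (rule image_mset_cong)
    fix d assume "d \<in># mset_set ?L"
    then have "d \<in> D" "0 \<le> d"
      using finite_nonneg_below[of D g] by auto
    then have "{y\<in>gaps D. Suc (count_below D d) \<le> count_below D y} = {y\<in>gaps D. d < y}"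
      using count_below_less_iff by (auto simp: Suc_le_eq)
    then show "(?h \<circ> (\<lambda>d. Suc (count_below D d))) d = card {y\<in>gaps D. d < y}"
      by (simp add: size_filter_partP_ge[OF fin])
  qed
  finally show ?thesis .
qed

lemma partP_reflected_complement:
  fixes D :: "int set"
  assumes "D \<subseteq> {0..}" "g \<notin> D" "\<forall>x>g. x \<in> D"
  shows "partP {e. g - e \<notin> D} = conjugate (partP D)"
  using partP_reflected_complement_image[OF assms] conjugate_partP_image[OF assms(2,3)]
  by simp

theorem mainTheorem11:
  fixes m n :: nat and D :: "int set"
  assumes "0 < m" "0 < n" "coprime m n"
    and "is_semimodule m n D" "zero_normalized D"
  shows "partP (hat m n D) = conjugate (partP D)"
proof -
  have nonneg: "D \<subseteq> {0..}"
    using assms(4) unfolding is_semimodule_def by blast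
  moreover have "\<forall>x>frobenius m n. x \<in> D"
    using semimodule_above_frobenius[OF assms(2-5)] by blast
  ultimately obtain g where "g \<notin> D" "\<forall>x>g. x \<in> D"
    by (rule obtain_largest_gap)
  moreover have "hat m n D = {e. g - e \<notin> D}"
    by (rule hat_eq_reflected_complement[OF assms(2-4) calculation])
  ultimately show ?thesis
    using partP_reflected_complement[OF nonneg] by simp
qed

end
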